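(* Let $(\mathfrak g,D)$ be a difference Lie algebra over $\mathbb R$ and let $\hat\omega:\wedge^2\mathfrak g\to\mathfrak g$, $\hat D:\mathfrak g\to\mathfrak g$ be linear maps generating an infinitesimal deformation of $(\mathfrak g,D)$. Then $(\hat\omega,\hat D)$ is a 2-cocycle: $\bar\delta(\hat\omega,\hat D)=0$, i.e. $d^{CE}_{\mathrm{ad}}\hat\omega=0$ and $d^{CE}_{\mathrm{ad}_D}\hat D+T(\hat\omega)=0$.
   Context: A difference Lie algebra $(\mathfrak g,D)$: a Lie algebra $\mathfrak g$ with linear $D$ satisfying $D[x,y]=[x,D(y)]-[y,D(x)]+[D(x),D(y)]$. $\mathbb R[t]/(t^2)\otimes\mathfrak g$ carries the $\mathbb R[t]/(t^2)$-bilinear extension of the bracket and the $\mathbb R[t]/(t^2)$-linear extension of $D$. $(\hat\omega,\hat D)$ generates an infinitesimal deformation if $[\cdot,\cdot]_t=[\cdot,\cdot]+t\hat\omega$ is a Lie bracket on $\mathbb R[t]/(t^2)\otimes\mathfrak g$ and $D_t=D+t\hat D$ is a difference operator for $[\cdot,\cdot]_t$, i.e. $D_t[x,y]_t=[D_t x,y]_t+[x,D_ty]_t+[D_tx,D_ty]_t$. $d^{CE}_{\mathrm{ad}}$ is the Chevalley–Eilenberg differential with coefficients in the adjoint representation, $d^{CE}_{\mathrm{ad}_D}$ that with coefficients in $\mathrm{ad}_D(x)u=[x,u]+[D(x),u]$; for $f\in\mathrm{Hom}(\wedge^n\mathfrak g,\mathfrak g)$, $T(f)(x_1,\dots,x_n)=(-1)^n\big(\sum_{k=1}^n\sum_{1\le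 i_1<\cdots<i_k\le n}f(y_1,\dots,y_n)-D(f(x_1,\dots,x_n))\big)$, $y_j=D(x_j)$ for $j\in\{i_1,\dots,i_k\}$ and $y_j=x_j$ otherwise. The cochains are $C^n(\mathfrak g,D)=\mathrm{Hom}(\wedge^n\mathfrak g,\mathfrak g)\oplus\mathrm{Hom}(\wedge^{n-1}\mathfrak g,\mathfrak g)$ ($n\ge2$), $C^1=\mathrm{Hom}(\mathfrak g,\mathfrak g)$, with $\bar\delta(f,\theta)=(d^{CE}_{\mathrm{ad}}f,d^{CE}_{\mathrm{ad}_D}\theta+T(f))$. *)

theory Defs
  imports Complex_Main "HOL-Analysis.Product_Vector"
begin

definition bilinear_map :: "('a::real_vector \<Rightarrow> 'a \<Rightarrow> 'b::real_vector) \<Rightarrow> bool" where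
  "bilinear_map f \<longleftrightarrow> (\<forall>x. linear (f x)) \<and> (\<forall>y. linear (\<lambda>x. f x y))"

definition lie_algebra :: "('a::real_vector \<Rightarrow> 'a \<Rightarrow> 'a) \<Rightarrow> bool" where
  "lie_algebra br \<longleftrightarrow> bilinear_map br \<and> (\<forall>x. br x x = 0) \<and>
     (\<forall>x y z. br x (br y z) + br y (br z x) + br z (br x y) = 0)"

text \<open>Alternating bilinear maps, i.e. linear maps on the exterior square.\<close>
definition alt_bilinear :: "('a::real_vector \<Rightarrow> 'a \<Rightarrow> 'a) \<Rightarrow> bool" where
  "alt_bilinear f \<longleftrightarrow> bilinear_map f \<and> (\<forall>x. f x x = 0)"

definition difference_operator :: "('a::real_vector \<Rightarrow> 'a \<Rightarrow> 'a) \<Rightarrow> ('a \<Rightarrow> 'a) \<Rightarrow> bool" where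
  "difference_operator br D \<longleftrightarrow> linear D \<and>
     (\<forall>x y. D (br x y) = br x (D y) - br y (D x) + br (D x) (D y))"

definition difference_lie_algebra :: "('a::real_vector \<Rightarrow> 'a \<Rightarrow> 'a) \<Rightarrow> ('a \<Rightarrow> 'a) \<Rightarrow> bool" where
  "difference_lie_algebra br D \<longleftrightarrow> lie_algebra br \<and> difference_operator br D"

section \<open>The module R[t]/(t^2) \<otimes> g, represented by pairs (x, y) = x + t y\<close>

text \<open>Scalar multiplication by a + t b (scalars of R[t]/(t^2) represented by pairs of reals).\<close>
definition dn_smul :: "real \<times> real \<Rightarrow> 'a::real_vector \<times> 'a \<Rightarrow> 'a \<times> 'a" where
  "dn_smul s v = (fst s *\<^sub>R fst v, fst s *\<^sub>R snd v + snd s *\<^sub>R fst v)"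

definition dn_lie_bracket :: "('a::real_vector \<times> 'a \<Rightarrow> 'a \<times> 'a \<Rightarrow> 'a \<times> 'a) \<Rightarrow> bool" where
  "dn_lie_bracket B \<longleftrightarrow>
     (\<forall>u v w. B (u + v) w = B u w + B v w) \<and>
     (\<forall>u v w. B u (v + w) = B u v + B u w) \<and>
     (\<forall>s u v. B (dn_smul s u) v = dn_smul s (B u v)) \<and>
     (\<forall>s u v. B u (dn_smul s v) = dn_smul s (B u v)) \<and>
     (\<forall>u. B u u = 0) \<and>
     (\<forall>u v w. B u (B v w) + B v (B w u) + B w (B u v) = 0)"

text \<open>[.,.]_t = [.,.] + t \<omega>, with [.,.] and \<omega> extended R[t]/(t^2)-bilinearly (t^2 = 0).\<close>
definition deformed_bracket ::
  "('a::real_vector \<Rightarrow> 'a \<Rightarrow> 'a) \<Rightarrow> ('a \<Rightarrow> 'a \<Rightarrow> 'a) \<Rightarrow> 'a \<times> 'a \<Rightarrow> 'a \<times> 'a \<Rightarrow> 'a \<times> 'a" where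
  "deformed_bracket br \<omega> u v =
     (br (fst u) (fst v), br (fst u) (snd v) + br (snd u) (fst v) + \<omega> (fst u) (fst v))"

text \<open>D_t = D + t \<hat>D, extended R[t]/(t^2)-linearly.\<close>
definition deformed_op :: "('a::real_vector \<Rightarrow> 'a) \<Rightarrow> ('a \<Rightarrow> 'a) \<Rightarrow> 'a \<times> 'a \<Rightarrow> 'a \<times> 'a" where
  "deformed_op D Dh u = (D (fst u), D (snd u) + Dh (fst u))"

definition generates_inf_deformation ::
  "('a::real_vector \<Rightarrow> 'a \<Rightarrow> 'a) \<Rightarrow> ('a \<Rightarrow> 'a) \<Rightarrow> ('a \<Rightarrow> 'a \<Rightarrow> 'a) \<Rightarrow> ('a \<Rightarrow> 'a) \<Rightarrow> bool" where
  "generates_inf_deformation br D \<omega> Dh \<longleftrightarrow>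
     (let Bt = deformed_bracket br \<omega>; Dt = deformed_op D Dh in
      dn_lie_bracket Bt \<and>
      (\<forall>u v. Dt (Bt u v) = Bt (Dt u) v + Bt u (Dt v) + Bt (Dt u) (Dt v)))"

definition CE_d1 :: "('a \<Rightarrow> 'a \<Rightarrow> 'a) \<Rightarrow> ('a \<Rightarrow> 'a \<Rightarrow> 'a::real_vector) \<Rightarrow> ('a \<Rightarrow> 'a) \<Rightarrow> 'a \<Rightarrow> 'a \<Rightarrow> 'a" where
  "CE_d1 br \<rho> \<theta> x1 x2 = \<rho> x1 (\<theta> x2) - \<rho> x2 (\<theta> x1) - \<theta> (br x1 x2)"

definition CE_d2 :: "('a \<Rightarrow> 'a \<Rightarrow> 'a) \<Rightarrow> ('a \<Rightarrow> 'a \<Rightarrow> 'a::real_vector) \<Rightarrow> ('a \<Rightarrow> 'a \<Rightarrow> 'a) \<Rightarrow> 'a \<Rightarrow> 'a \<Rightarrow> 'a \<Rightarrow> 'a" where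
  "CE_d2 br \<rho> f x1 x2 x3 =
     \<rho> x1 (f x2 x3) - \<rho> x2 (f x1 x3) + \<rho> x3 (f x1 x2)
     - f (br x1 x2) x3 + f (br x1 x3) x2 - f (br x2 x3) x1"

definition ad :: "('a \<Rightarrow> 'a \<Rightarrow> 'a) \<Rightarrow> 'a \<Rightarrow> 'a \<Rightarrow> 'a" where
  "ad br x u = br x u"

definition ad_D :: "('a \<Rightarrow> 'a \<Rightarrow> 'a::real_vector) \<Rightarrow> ('a \<Rightarrow> 'a) \<Rightarrow> 'a \<Rightarrow> 'a \<Rightarrow> 'a" where
  "ad_D br D x u = br x u + br (D x) u"

text \<open>T on 2-cochains (n = 2, sign (-1)^2 = 1).\<close>
definition T2 :: "('a \<Rightarrow> 'a::real_vector) \<Rightarrow> ('a \<Rightarrow> 'a \<Rightarrow> 'a) \<Rightarrow> 'a \<Rightarrow> 'a \<Rightarrow> 'a" where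
  "T2 D f x1 x2 = f (D x1) x2 + f x1 (D x2) + f (D x1) (D x2) - D (f x1 x2)"

end

theory Submission
  imports Defs
begin

text \<open>View \<open>g\<close> inside \<open>\<real>[t]/(t\<^sup>2) \<otimes> g\<close> as the elements \<open>(x, 0)\<close> and compare
  \<open>t\<close>-coefficients. For the Jacobi identity of \<open>[\<cdot>,\<cdot>]\<^sub>t\<close> on three such elements this
  coefficient is, up to antisymmetry of \<open>[\<cdot>,\<cdot>]\<close> and \<open>\<omega>\<close>, the cochain \<open>d\<^sub>a\<^sub>d \<omega>\<close>; for the
  difference-operator identity of \<open>D\<^sub>t\<close> on two such elements it is
  \<open>d\<^sub>a\<^sub>d\<^sub>D Dh + T(\<omega>)\<close>.\<close>

lemma bilinear_map_zero_left: "bilinear_map f \<Longrightarrow> f 0 y = 0"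
  unfolding bilinear_map_def using linear_0 by fastforce

lemma bilinear_map_zero_right: "bilinear_map f \<Longrightarrow> f x 0 = 0"
  unfolding bilinear_map_def using linear_0 by fastforce

lemma bilinear_map_minus_right: "bilinear_map f \<Longrightarrow> f x (- y) = - f x y"
  unfolding bilinear_map_def using linear_neg by blast

lemma alt_bilinear_swap:
  assumes "alt_bilinear f"
  shows "f x y = - f y x"
proof -
  have left: "linear (\<lambda>x. f x z)" and right: "linear (f z)" and diag: "f z z = 0" for z
    using assms unfolding alt_bilinear_def bilinear_map_def by auto
  have "0 = f (x + y) (x + y)"
    using diag by simp
  also have "\<dots> = f x x + f x y + f y x + f y y"
    using linear_add[OF left] linear_add[OF right] by (simp add: algebra_simps)
  finally show ?thesis
    using diag by (simp add: eq_neg_iff_add_eq_0)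
qed

lemma lie_algebra_imp_alt_bilinear: "lie_algebra br \<Longrightarrow> alt_bilinear br"
  unfolding lie_algebra_def alt_bilinear_def by blast

lemma dn_lie_bracket_jacobi:
  "dn_lie_bracket B \<Longrightarrow> B u (B v w) + B v (B w u) + B w (B u v) = 0"
  unfolding dn_lie_bracket_def by (elim conjE allE)

lemma CE_d2_ad_eq_snd_deformed_jacobiator:
  fixes br \<omega> :: "'a::real_vector \<Rightarrow> 'a \<Rightarrow> 'a"
  assumes br: "alt_bilinear br" and \<omega>: "alt_bilinear \<omega>"
  defines "B \<equiv> deformed_bracket br \<omega>"
  shows "CE_d2 br (ad br) \<omega> x y z =
    snd (B (x, 0) (B (y, 0) (z, 0)) + B (y, 0) (B (z, 0) (x, 0)) + B (z, 0) (B (x, 0) (y, 0)))"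
proof -
  have "bilinear_map br" "bilinear_map \<omega>"
    using br \<omega> unfolding alt_bilinear_def by blast+
  then have "snd (B (x, 0) (B (y, 0) (z, 0)) + B (y, 0) (B (z, 0) (x, 0)) + B (z, 0) (B (x, 0) (y, 0)))
      = br x (\<omega> y z) + \<omega> x (br y z) + br y (\<omega> z x) + \<omega> y (br z x) + br z (\<omega> x y) + \<omega> z (br x y)"
    unfolding B_def by (simp add: deformed_bracket_def bilinear_map_zero_left bilinear_map_zero_right)
  moreover have "\<omega> x (br y z) = - \<omega> (br y z) x" and "\<omega> z (br x y) = - \<omega> (br x y) z"
    using alt_bilinear_swap[OF \<omega>] by blast+
  moreover have "br y (\<omega> z x) = - br y (\<omega> x z)"
    using alt_bilinear_swap[OF \<omega>, of z x] bilinear_map_minus_right[OF \<open>bilinear_map br\<close>] by metis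
  moreover have "\<omega> y (br z x) = \<omega> (br x z) y"
    using alt_bilinear_swap[OF \<omega>, of y "br x z"] alt_bilinear_swap[OF br, of z x]
      bilinear_map_minus_right[OF \<open>bilinear_map \<omega>\<close>] by simp
  ultimately show ?thesis
    unfolding CE_d2_def ad_def by (simp add: algebra_simps)
qed

lemma CE_d1_ad_D_plus_T2_eq_snd_deformed_defect:
  fixes br \<omega> :: "'a::real_vector \<Rightarrow> 'a \<Rightarrow> 'a" and D Dh :: "'a \<Rightarrow> 'a"
  assumes br: "alt_bilinear br" and \<omega>: "alt_bilinear \<omega>" and D: "linear D"
  defines "B \<equiv> deformed_bracket br \<omega>" and "Dt \<equiv> deformed_op D Dh"
  shows "CE_d1 br (ad_D br D) Dh x y + T2 D \<omega> x y =
    snd (B (Dt (x, 0)) (y, 0) + B (x, 0) (Dt (y, 0)) + B (Dt (x, 0)) (Dt (y, 0)) - Dt (B (x, 0) (y, 0)))"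
proof -
  have "bilinear_map br"
    using br unfolding alt_bilinear_def by blast
  then have "snd (B (Dt (x, 0)) (y, 0) + B (x, 0) (Dt (y, 0)) + B (Dt (x, 0)) (Dt (y, 0)) - Dt (B (x, 0) (y, 0)))
      = br (Dh x) y + \<omega> (D x) y + br x (Dh y) + \<omega> x (D y)
        + br (D x) (Dh y) + br (Dh x) (D y) + \<omega> (D x) (D y) - (D (\<omega> x y) + Dh (br x y))"
    unfolding B_def Dt_def using D
    by (simp add: deformed_bracket_def deformed_op_def linear_0 bilinear_map_zero_left bilinear_map_zero_right)
  moreover have "br (Dh x) y = - br y (Dh x)" "br (Dh x) (D y) = - br (D y) (Dh x)"
    using alt_bilinear_swap[OF br] by blast+
  ultimately show ?thesis
    unfolding CE_d1_def ad_D_def T2_def by (simp add: algebra_simps)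
qed

theorem theorem4p4:
  fixes br :: "'a::real_vector \<Rightarrow> 'a \<Rightarrow> 'a" and D :: "'a \<Rightarrow> 'a"
    and \<omega> :: "'a \<Rightarrow> 'a \<Rightarrow> 'a" and Dh :: "'a \<Rightarrow> 'a"
  assumes "difference_lie_algebra br D"
    and "alt_bilinear \<omega>" and "linear Dh"
    and "generates_inf_deformation br D \<omega> Dh"
  shows "(\<forall>x1 x2 x3. CE_d2 br (ad br) \<omega> x1 x2 x3 = 0) \<and>
         (\<forall>x1 x2. CE_d1 br (ad_D br D) Dh x1 x2 + T2 D \<omega> x1 x2 = 0)"
proof -
  let ?B = "deformed_bracket br \<omega>" and ?Dt = "deformed_op D Dh"
  have br: "alt_bilinear br" and D: "linear D"
    using assms(1) lie_algebra_imp_alt_bilinear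
    unfolding difference_lie_algebra_def difference_operator_def by auto
  have lie: "dn_lie_bracket ?B"
    and difference: "?Dt (?B u v) = ?B (?Dt u) v + ?B u (?Dt v) + ?B (?Dt u) (?Dt v)" for u v
    using assms(4) unfolding generates_inf_deformation_def Let_def by blast+
  have "CE_d2 br (ad br) \<omega> x1 x2 x3 = 0" for x1 x2 x3
    by (simp only: CE_d2_ad_eq_snd_deformed_jacobiator[OF br assms(2)]
        dn_lie_bracket_jacobi[OF lie] snd_zero)
  moreover have "CE_d1 br (ad_D br D) Dh x1 x2 + T2 D \<omega> x1 x2 = 0" for x1 x2
    by (simp only: CE_d1_ad_D_plus_T2_eq_snd_deformed_defect[OF br assms(2) D] difference
        diff_self snd_zero)
  ultimately show ?thesis
    by blast
qed

end
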